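(* Let $d\geq 1$, $p\in[1,\infty)\setminus\{2\}$, and let $\bm{Q}_1,\bm{Q}_2$ be $d\times d$ symmetric positive definite matrices. For $\beta>0$ let $\bm{Q}(\beta)=\left(1+\frac{1}{\beta}\right)^{1/p}\bm{Q}_1+(1+\beta)^{1/p}\bm{Q}_2$. Then the function $\beta\mapsto\mathrm{trace}(\bm{Q}(\beta))$ on $(0,\infty)$ is minimized at $$\beta^*_{\mathrm{tr}}=\left(\frac{\mathrm{trace}(\bm{Q}_1)}{\mathrm{trace}(\bm{Q}_2)}\right)^{\frac{p}{1+p}}.$$ *)

theory Defs
  imports "HOL-Analysis.Analysis"
begin

definition sym_pos_def_mat :: "real^'n^'n \<Rightarrow> bool" where
  "sym_pos_def_mat A \<longleftrightarrow> transpose A = A \<and> (\<forall>x. x \<noteq> 0 \<longrightarrow> x \<bullet> (A *v x) > 0)"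

definition Qmat :: "real \<Rightarrow> real^'n^'n \<Rightarrow> real^'n^'n \<Rightarrow> real \<Rightarrow> real^'n^'n" where
  "Qmat p Q1 Q2 \<beta> = (1 + 1/\<beta>) powr (1/p) *\<^sub>R Q1 + (1 + \<beta>) powr (1/p) *\<^sub>R Q2"

end

theory Submission
  imports Defs
begin

text \<open>
  By linearity of the trace, with \<open>s = 1/p\<close>, \<open>a = trace Q1 > 0\<close> and \<open>b = trace Q2 > 0\<close>,
  the function to minimise is \<open>a (1 + 1/\<beta>)^s + b (1 + \<beta>)^s\<close>. Write \<open>a = b c^(1+s)\<close>.
  Hoelder's inequality for two terms with exponents \<open>(1+s)/s\<close> and \<open>1+s\<close>, applied to
  \<open>c + 1 = \<beta>^(s/(1+s)) (c^(1+s) / \<beta>^s)^(1/(1+s)) + 1\<close>, gives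
  \<open>b (1 + c)^(1+s) \<le> a (1 + 1/\<beta>)^s + b (1 + \<beta>)^s\<close>, with equality at \<open>\<beta> = c\<close>.
\<close>

lemma holder_inequality_two_terms:
  fixes u1 u2 v1 v2 \<alpha> \<gamma> :: real
  assumes "u1 > 0" "u2 > 0" "v1 > 0" "v2 > 0" "\<alpha> \<ge> 0" "\<gamma> \<ge> 0" "\<alpha> + \<gamma> = 1"
  shows "u1 powr \<alpha> * v1 powr \<gamma> + u2 powr \<alpha> * v2 powr \<gamma> \<le> (u1 + u2) powr \<alpha> * (v1 + v2) powr \<gamma>"
proof -
  define U where "U = u1 + u2"
  define V where "V = v1 + v2"
  have U: "U > 0" and V: "V > 0" using assms by (auto simp: U_def V_def)
  have young1: "(u1/U) powr \<alpha> * (v1/V) powr \<gamma> \<le> \<alpha> * (u1/U) + \<gamma> * (v1/V)"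
    by (rule Youngs_inequality_0) (use assms U V in auto)
  have young2: "(u2/U) powr \<alpha> * (v2/V) powr \<gamma> \<le> \<alpha> * (u2/U) + \<gamma> * (v2/V)"
    by (rule Youngs_inequality_0) (use assms U V in auto)
  have "\<alpha> * (u1/U) + \<gamma> * (v1/V) + (\<alpha> * (u2/U) + \<gamma> * (v2/V)) = \<alpha> * ((u1 + u2)/U) + \<gamma> * ((v1 + v2)/V)"
    by (simp add: add_divide_distrib algebra_simps)
  also have "\<dots> = 1" using U V assms(7) by (simp add: U_def V_def)
  finally have "(u1/U) powr \<alpha> * (v1/V) powr \<gamma> + (u2/U) powr \<alpha> * (v2/V) powr \<gamma> \<le> 1"
    using young1 young2 by linarith
  then have "(u1 powr \<alpha> * v1 powr \<gamma> + u2 powr \<alpha> * v2 powr \<gamma>) / (U powr \<alpha> * V powr \<gamma>) \<le> 1"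
    using assms U V by (simp add: powr_divide add_divide_distrib)
  then show ?thesis
    using U V by (simp add: U_def V_def pos_divide_le_eq)
qed

lemma powr_balance_le:
  fixes c \<beta> s :: real
  assumes "c > 0" "\<beta> > 0" "s \<ge> 0"
  shows "(1 + c) powr (1 + s) \<le> c powr (1 + s) * (1 + 1/\<beta>) powr s + (1 + \<beta>) powr s"
proof -
  define \<alpha> where "\<alpha> = s / (1 + s)"
  define \<gamma> where "\<gamma> = 1 / (1 + s)"
  define v where "v = c powr (1 + s) / \<beta> powr s"
  have "\<beta> powr \<alpha> * v powr \<gamma> = c"
    using assms by (simp add: v_def \<alpha>_def \<gamma>_def powr_divide powr_powr)
  moreover have "\<beta> powr \<alpha> * v powr \<gamma> + 1 powr \<alpha> * 1 powr \<gamma> \<le> (\<beta> + 1) powr \<alpha> * (v + 1) powr \<gamma>"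
    by (rule holder_inequality_two_terms) (use assms in \<open>auto simp: v_def \<alpha>_def \<gamma>_def field_simps\<close>)
  ultimately have "1 + c \<le> (1 + \<beta>) powr \<alpha> * (v + 1) powr \<gamma>"
    by (simp add: add.commute)
  then have "(1 + c) powr (1 + s) \<le> ((1 + \<beta>) powr \<alpha> * (v + 1) powr \<gamma>) powr (1 + s)"
    using assms by (intro powr_mono2) auto
  also have "\<dots> = (1 + \<beta>) powr s * (v + 1)"
    using assms by (simp add: v_def \<alpha>_def \<gamma>_def powr_mult powr_powr)
  also have "\<dots> = c powr (1 + s) * (1 + 1/\<beta>) powr s + (1 + \<beta>) powr s"
  proof -
    have "(1 + 1/\<beta>) powr s = (1 + \<beta>) powr s / \<beta> powr s"
      using assms by (simp add: field_simps flip: powr_divide)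
    then show ?thesis by (simp add: v_def field_simps)
  qed
  finally show ?thesis .
qed

lemma powr_balance_eq:
  fixes c s :: real
  assumes "c > 0"
  shows "c powr (1 + s) * (1 + 1/c) powr s + (1 + c) powr s = (1 + c) powr (1 + s)"
proof -
  have "c powr (1 + s) * (1 + 1/c) powr s = c * (c * (1 + 1/c)) powr s"
    using assms by (simp add: powr_add powr_mult)
  also have "c * (1 + 1/c) = 1 + c"
    using assms by (simp add: field_simps)
  finally show ?thesis
    using assms by (simp add: powr_add field_simps)
qed

lemma weighted_powr_sum_minimum:
  fixes a b s \<beta> :: real
  assumes "a > 0" "b > 0" "s \<ge> 0" "\<beta> > 0"
  defines "c \<equiv> (a / b) powr (1 / (1 + s))"
  shows "a * (1 + 1/c) powr s + b * (1 + c) powr s \<le> a * (1 + 1/\<beta>) powr s + b * (1 + \<beta>) powr s"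
proof -
  have c: "c > 0" using assms by (simp add: c_def)
  have a: "a = b * c powr (1 + s)"
    using assms by (simp add: c_def powr_powr)
  have "a * (1 + 1/c) powr s + b * (1 + c) powr s
      = b * (c powr (1 + s) * (1 + 1/c) powr s + (1 + c) powr s)"
    by (simp add: a algebra_simps)
  also have "\<dots> = b * (1 + c) powr (1 + s)"
    by (simp add: powr_balance_eq c)
  also have "\<dots> \<le> b * (c powr (1 + s) * (1 + 1/\<beta>) powr s + (1 + \<beta>) powr s)"
    using powr_balance_le[OF c assms(4,3)] assms(2) by simp
  also have "\<dots> = a * (1 + 1/\<beta>) powr s + b * (1 + \<beta>) powr s"
    by (simp add: a algebra_simps)
  finally show ?thesis .
qed

lemma sym_pos_def_mat_trace_pos:
  fixes A :: "real^'n^'n"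
  assumes "sym_pos_def_mat A"
  shows "trace A > 0"
proof -
  have "A $ i $ i > 0" for i
  proof -
    have "axis i (1::real) \<noteq> 0" by (simp add: axis_eq_0_iff)
    then have "axis i 1 \<bullet> (A *v axis i 1) > 0"
      using assms unfolding sym_pos_def_mat_def by blast
    moreover have "A *v axis i 1 = (\<chi> k. A $ k $ i)"
      by (simp add: matrix_vector_mult_def axis_def if_distrib cong: if_cong)
    ultimately show ?thesis by (simp add: inner_axis')
  qed
  then show ?thesis unfolding trace_def by (intro sum_pos) auto
qed

lemma trace_scaleR: "trace (c *\<^sub>R (A::real^'n^'n)) = c * trace A"
  unfolding trace_def by (simp add: sum_distrib_left)

lemma trace_Qmat:
  "trace (Qmat p Q1 Q2 \<beta>) = trace Q1 * (1 + 1/\<beta>) powr (1/p) + trace Q2 * (1 + \<beta>) powr (1/p)"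
  unfolding Qmat_def by (simp add: trace_add trace_scaleR mult.commute)

theorem mainTheorem3:
  fixes Q1 Q2 :: "real^'n^'n" and p :: real
  assumes "p \<ge> 1" and "p \<noteq> 2"
    and "sym_pos_def_mat Q1" and "sym_pos_def_mat Q2"
  shows "(trace Q1 / trace Q2) powr (p / (1 + p)) > 0 \<and>
         (\<forall>\<beta>>0. trace (Qmat p Q1 Q2 ((trace Q1 / trace Q2) powr (p / (1 + p))))
                   \<le> trace (Qmat p Q1 Q2 \<beta>))"
proof -
  have a: "trace Q1 > 0" and b: "trace Q2 > 0"
    using assms(3,4) by (simp_all add: sym_pos_def_mat_trace_pos)
  have exponent: "p / (1 + p) = 1 / (1 + 1/p)"
    using assms(1) by (simp add: field_simps)
  show ?thesis
    unfolding trace_Qmat exponent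
    using a b assms(1) weighted_powr_sum_minimum[of "trace Q1" "trace Q2" "1/p"] by simp
qed

end
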